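(* Let $A$ be a multiset of points in $\mathbb{Z}^2$ with $|A|\geq 6$ (counting multiplicities). If $\boldsymbol{p}\in\mathbb{R}^2$ is a point with $\boldsymbol{p}\notin A$ that has half-space depth $2$ with respect to $A$, then $A$ can be partitioned into two submultisets $A_1,A_2$ with $\boldsymbol{p}\in\conv(A_1)\cap\conv(A_2)$.
   Context: A point $\boldsymbol{p}$ has half-space depth $t$ with respect to a multiset $A$ if every closed half-plane containing $\boldsymbol{p}$ contains at least $t$ points of $A$, counted with multiplicity. A partition of a multiset into submultisets means the multiplicities of each element in the parts sum to its multiplicity in the multiset. *)

theory Defs
  imports "HOL-Analysis.Analysis" "HOL-Library.Multiset"
begin

definition closed_halfplane :: "(real \<times> real) \<Rightarrow> real \<Rightarrow> (real \<times> real) set" where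
  "closed_halfplane a b = {x. a \<bullet> x \<le> b}"

definition has_halfspace_depth :: "(real \<times> real) \<Rightarrow> nat \<Rightarrow> (real \<times> real) multiset \<Rightarrow> bool" where
  "has_halfspace_depth p t A \<longleftrightarrow>
     (\<forall>a b. a \<noteq> 0 \<longrightarrow> p \<in> closed_halfplane a b \<longrightarrow>
        size (filter_mset (\<lambda>x. x \<in> closed_halfplane a b) A) \<ge> t)"

definition integral_point :: "(real \<times> real) \<Rightarrow> bool" where
  "integral_point x \<longleftrightarrow> fst x \<in> \<int> \<and> snd x \<in> \<int>"

end

theory Submission
  imports Defs
begin

text \<open>Sort the points of \<open>A\<close> by their polar angle around \<open>p\<close>. The points in a closed
  half-plane bounded by a line through \<open>p\<close> then form an arc of this cyclic order, and by depth 2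
  there are at least two of them. Colouring the points alternately along the cycle therefore puts
  both colours into every such half-plane, and the separation theorem places \<open>p\<close> in the convex
  hull of each colour class. If \<open>|A|\<close> is odd, one pair of cyclic neighbours must share a colour;
  it is placed at one of the pairs \<open>{0, 1}\<close>, \<open>{2, 3}\<close>, \<open>{4, 5}\<close> that no half-plane cuts off
  on its own: half-planes cutting off each of these pairs but not the point 6 would have three
  linearly independent normals in the plane.\<close>

lemma cos_minus_2pi_int [simp]: "cos (x - 2*pi * of_int k) = cos x"
  by (simp add: cos_diff)

lemma cos_nonpos: "pi/2 \<le> x \<Longrightarrow> x \<le> 3*pi/2 \<Longrightarrow> cos x \<le> 0"
  using cos_ge_zero[of "x - pi"] by simp

lemma cos_pos_imp_near_2pi_multiple:
  assumes "cos x > 0"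
  obtains k :: int where "\<bar>x - 2*pi * of_int k\<bar> < pi/2"
proof
  define k where "k = \<lfloor>x/(2*pi) + 1/2\<rfloor>"
  define r where "r = x - 2*pi * of_int k"
  have "of_int k \<le> x/(2*pi) + 1/2" "x/(2*pi) + 1/2 < of_int k + 1"
    unfolding k_def by linarith+
  then have "-pi \<le> r" "r < pi"
    unfolding r_def by (simp_all add: field_simps)
  moreover have "cos r > 0"
    using assms unfolding r_def by simp
  ultimately have "r < pi/2" "-(pi/2) < r"
    using cos_nonpos[of r] cos_nonpos[of "r + 2*pi"] by force+
  then show "\<bar>x - 2*pi * of_int k\<bar> < pi/2"
    unfolding r_def by linarith
qed

lemma cos_pos_nonpos_pos_gap:
  fixes x y z :: real
  assumes "x \<le> y" "y \<le> z" "cos x > 0" "cos y \<le> 0" "cos z > 0"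
  shows "z - x > pi"
proof (rule ccontr)
  assume close: "\<not> z - x > pi"
  obtain k :: int where "\<bar>x - 2*pi * of_int k\<bar> < pi/2"
    using assms(3) by (rule cos_pos_imp_near_2pi_multiple)
  then have k: "-(pi/2) < x - 2*pi * of_int k" "x - 2*pi * of_int k < pi/2"
    by arith+
  have "pi/2 \<le> y - 2*pi * of_int k"
  proof (rule ccontr)
    assume "\<not> ?thesis"
    then have "cos (y - 2*pi * of_int k) > 0"
      using k assms(1) by (intro cos_gt_zero_pi) auto
    with assms(4) show False by simp
  qed
  then have "cos (z - 2*pi * of_int k) \<le> 0"
    using k assms(2) close by (intro cos_nonpos) auto
  with assms(5) show False by simp
qed

lemma cos_signs_no_alternation:
  fixes t1 t2 t3 t4 :: real
  assumes "t1 \<le> t2" "t2 \<le> t3" "t3 \<le> t4" "t4 - t1 < 2*pi"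
  shows "\<not> (cos t1 \<le> 0 \<and> cos t2 > 0 \<and> cos t3 \<le> 0 \<and> cos t4 > 0)"
    and "\<not> (cos t1 > 0 \<and> cos t2 \<le> 0 \<and> cos t3 > 0 \<and> cos t4 \<le> 0)"
proof -
  show "\<not> (cos t1 \<le> 0 \<and> cos t2 > 0 \<and> cos t3 \<le> 0 \<and> cos t4 > 0)"
  proof
    \<comment> \<open>Together with its shift by \<open>2\<pi>\<close> the pattern contains two sign changes back
      to positive, each spanning more than \<open>\<pi>\<close>, inside a window of length \<open>2\<pi>\<close>.\<close>
    assume "cos t1 \<le> 0 \<and> cos t2 > 0 \<and> cos t3 \<le> 0 \<and> cos t4 > 0"
    then have "t4 - t2 > pi" "(t2 + 2*pi) - t4 > pi"
      using cos_pos_nonpos_pos_gap[of t2 t3 t4] cos_pos_nonpos_pos_gap[of t4 "t1 + 2*pi" "t2 + 2*pi"]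
        assms by auto
    then show False by simp
  qed
  show "\<not> (cos t1 > 0 \<and> cos t2 \<le> 0 \<and> cos t3 > 0 \<and> cos t4 \<le> 0)"
  proof
    assume "cos t1 > 0 \<and> cos t2 \<le> 0 \<and> cos t3 > 0 \<and> cos t4 \<le> 0"
    then have "t3 - t1 > pi" "(t1 + 2*pi) - t3 > pi"
      using cos_pos_nonpos_pos_gap[of t1 t2 t3] cos_pos_nonpos_pos_gap[of t3 t4 "t1 + 2*pi"]
        assms by auto
    then show False by simp
  qed
qed

definition polar_angle :: "real \<times> real \<Rightarrow> real" where
  "polar_angle v = (SOME t. 0 \<le> t \<and> t < 2*pi \<and> v = norm v *\<^sub>R (cos t, sin t))"

lemma polar_angle:
  assumes "v \<noteq> 0"
  shows "0 \<le> polar_angle v" "polar_angle v < 2*pi"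
    and "v = norm v *\<^sub>R (cos (polar_angle v), sin (polar_angle v))"
proof -
  obtain x y where v: "v = (x, y)" by (cases v)
  define r where "r = norm v"
  have r: "r > 0" using assms unfolding r_def by simp
  have "(x/r)^2 + (y/r)^2 = (x^2 + y^2) / r^2" by (simp add: power_divide add_divide_distrib)
  also have "x^2 + y^2 = r^2" unfolding r_def v by (simp add: norm_Pair)
  finally have "(x/r)^2 + (y/r)^2 = 1" using r by simp
  then obtain t where t: "0 \<le> t" "t < 2*pi" "x/r = cos t" "y/r = sin t"
    by (rule sincos_total_2pi)
  have "v = r *\<^sub>R (cos t, sin t)" using t r by (auto simp: v field_simps)
  with t have "\<exists>t. 0 \<le> t \<and> t < 2*pi \<and> v = norm v *\<^sub>R (cos t, sin t)"
    unfolding r_def by blast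
  from someI_ex[OF this] show "0 \<le> polar_angle v" "polar_angle v < 2*pi"
      "v = norm v *\<^sub>R (cos (polar_angle v), sin (polar_angle v))"
    unfolding polar_angle_def by blast+
qed

lemma inner_eq_norm_mult_cos_polar_angle:
  assumes "a \<noteq> 0" "v \<noteq> 0"
  shows "inner a v = norm a * norm v * cos (polar_angle v - polar_angle a)"
  by (subst polar_angle(3)[OF assms(1)], subst polar_angle(3)[OF assms(2)])
    (simp add: cos_diff algebra_simps)

text \<open>The sets of this form are exactly the arcs of the cycle \<open>0, 1, \<dots>, n - 1\<close>
  (including the empty and the full set).\<close>

definition cyclic_interval :: "nat \<Rightarrow> nat set \<Rightarrow> bool" where
  "cyclic_interval n S \<longleftrightarrow> (\<forall>i k l m. i < k \<longrightarrow> k < l \<longrightarrow> l < m \<longrightarrow> m < n \<longrightarrow>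
     \<not> (i \<in> S \<and> k \<notin> S \<and> l \<in> S \<and> m \<notin> S) \<and> \<not> (i \<notin> S \<and> k \<in> S \<and> l \<notin> S \<and> m \<in> S))"

definition halfplane_indices :: "(real \<times> real) list \<Rightarrow> real \<times> real \<Rightarrow> nat set" where
  "halfplane_indices ws a = {i. i < length ws \<and> inner a (ws!i) \<le> 0}"

lemma halfplane_indices_cyclic_interval:
  fixes ws :: "(real \<times> real) list"
  assumes sorted: "sorted (map polar_angle ws)" and nonzero: "0 \<notin> set ws" and "a \<noteq> 0"
  shows "cyclic_interval (length ws) (halfplane_indices ws a)" (is "cyclic_interval _ ?S")
proof -
  let ?t = "\<lambda>i. polar_angle (ws!i) - polar_angle a"
  have nz: "ws!i \<noteq> 0" if "i < length ws" for i
    using nonzero that by (metis nth_mem)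
  have mem: "inner a (ws!i) \<le> 0 \<longleftrightarrow> cos (?t i) \<le> 0" if "i < length ws" for i
    using \<open>a \<noteq> 0\<close> nz[OF that]
    by (simp add: inner_eq_norm_mult_cos_polar_angle[OF \<open>a \<noteq> 0\<close> nz[OF that]] mult_le_0_iff)
  have mono: "?t i \<le> ?t k" if "i \<le> k" "k < length ws" for i k
    using sorted_nth_mono[OF sorted, of i k] that by simp
  have window: "?t m - ?t i < 2*pi" if "i < length ws" "m < length ws" for i m
    using polar_angle(1,2)[OF nz[OF that(1)]] polar_angle(1,2)[OF nz[OF that(2)]] by linarith
  show ?thesis
    unfolding cyclic_interval_def
  proof (intro allI impI)
    fix i k l m assume "i < k" "k < l" "l < m" "m < length ws"
    with cos_signs_no_alternation[of "?t i" "?t k" "?t l" "?t m"] mono window mem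
    show "\<not> (i \<in> ?S \<and> k \<notin> ?S \<and> l \<in> ?S \<and> m \<notin> ?S) \<and>
      \<not> (i \<notin> ?S \<and> k \<in> ?S \<and> l \<notin> ?S \<and> m \<in> ?S)"
      by (simp add: halfplane_indices_def not_less)
  qed
qed

lemma cyclic_interval_with_gap_contains_ends:
  assumes "cyclic_interval n S" "l \<in> S" "u \<in> S" "l < k" "k < u" "u < n" "k \<notin> S"
  shows "0 \<in> S" "n - 1 \<in> S"
proof -
  show "0 \<in> S"
  proof (rule ccontr)
    assume "0 \<notin> S"
    then have "0 < l" using \<open>l \<in> S\<close> by (cases l) auto
    with assms \<open>0 \<notin> S\<close> show False unfolding cyclic_interval_def by meson
  qed
  show "n - 1 \<in> S"
  proof (rule ccontr)
    assume "n - 1 \<notin> S"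
    then have "u < n - 1" using \<open>u \<in> S\<close> \<open>u < n\<close> by (cases "u = n - 1") auto
    moreover have "n - 1 < n" using \<open>u < n\<close> by simp
    ultimately show False using assms \<open>n - 1 \<notin> S\<close> unfolding cyclic_interval_def by meson
  qed
qed

lemma interval_meets_both_colours:
  fixes c :: "nat \<Rightarrow> bool"
  assumes "l < u" "u < n"
    and alternating: "\<And>i. Suc i < n \<Longrightarrow> i \<noteq> j \<Longrightarrow> c i \<noteq> c (Suc i)"
    and not_pair: "{l..u} \<noteq> {j, Suc j}"
  shows "(\<exists>i\<in>{l..u}. c i) \<and> (\<exists>i\<in>{l..u}. \<not> c i)"
proof -
  have both: "?thesis" if "i \<in> {l..u}" "Suc i \<in> {l..u}" "c i \<noteq> c (Suc i)" for i
    using that by metis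
  show ?thesis
  proof (cases "l = j")
    case False
    with assms show ?thesis by (intro both[of l]) auto
  next
    case True
    with not_pair \<open>l < u\<close> have "Suc (Suc l) \<le> u" by (auto simp: atLeastAtMostSuc_conv)
    with True assms show ?thesis by (intro both[of "Suc l"]) auto
  qed
qed

lemma cyclic_interval_meets_both_colours:
  fixes S :: "nat set" and c :: "nat \<Rightarrow> bool"
  assumes S: "S \<subseteq> {..<n}" "2 \<le> card S" "cyclic_interval n S"
    and alternating: "\<And>i. Suc i < n \<Longrightarrow> i \<noteq> j \<Longrightarrow> c i \<noteq> c (Suc i)"
    and wrap: "c 0 \<noteq> c (n - 1)"
    and not_pair: "S \<noteq> {j, Suc j}"
  shows "(\<exists>i\<in>S. c i) \<and> (\<exists>i\<in>S. \<not> c i)"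
proof -
  have "finite S" using S(1) finite_subset by blast
  moreover have "S \<noteq> {}" using S(2) by auto
  ultimately have l: "Min S \<in> S" "\<And>x. x \<in> S \<Longrightarrow> Min S \<le> x"
    and u: "Max S \<in> S" "\<And>x. x \<in> S \<Longrightarrow> x \<le> Max S" by auto
  have "Max S < n" using u(1) S(1) by auto
  have "Min S < Max S"
  proof (rule ccontr)
    assume "\<not> Min S < Max S"
    then have "S \<subseteq> {Min S}" using l u by force
    then have "card S \<le> 1" using card_mono[of "{Min S}" S] by simp
    then show False using S(2) by simp
  qed
  show ?thesis
  proof (cases "{Min S..Max S} \<subseteq> S")
    case True
    then have "S = {Min S..Max S}" using l u by fastforce
    with interval_meets_both_colours[where c = c and j = j, OF \<open>Min S < Max S\<close> \<open>Max S < n\<close> alternating] not_pair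
    show ?thesis by simp
  next
    case False
    then obtain k where "Min S < k" "k < Max S" "k \<notin> S"
      using l(1) u(1) by (metis atLeastAtMost_iff le_neq_implies_less subsetI)
    with cyclic_interval_with_gap_contains_ends[OF S(3) l(1) u(1)] \<open>Max S < n\<close>
    have "0 \<in> S" "n - 1 \<in> S" by auto
    with wrap show ?thesis by metis
  qed
qed

lemma cyclic_intervals_two_colouring:
  assumes "6 \<le> n"
    and F: "\<And>S. S \<in> F \<Longrightarrow> S \<subseteq> {..<n} \<and> 2 \<le> card S \<and> cyclic_interval n S"
    and odd_free_pair: "odd n \<Longrightarrow> \<exists>j\<in>{0, 2, 4}. {j, Suc j} \<notin> F"
  obtains c where "\<And>S. S \<in> F \<Longrightarrow> (\<exists>i\<in>S. c i) \<and> (\<exists>i\<in>S. \<not> c i)"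
proof -
  obtain c :: "nat \<Rightarrow> bool" and j
    where alternating: "\<And>i. Suc i < n \<Longrightarrow> i \<noteq> j \<Longrightarrow> c i \<noteq> c (Suc i)"
      and wrap: "c 0 \<noteq> c (n - 1)" and free_pair: "{j, Suc j} \<notin> F"
  proof (cases "even n")
    case True
    moreover have "{n, Suc n} \<notin> F" using F by auto
    ultimately show ?thesis using \<open>6 \<le> n\<close> by (intro that[of n even]) auto
  next
    case False
    then obtain j where "j \<in> {0, 2, 4}" "{j, Suc j} \<notin> F" using odd_free_pair by blast
    moreover have "even (n - 1)" "j < n - 1" using False \<open>6 \<le> n\<close> calculation(1) by auto
    ultimately show ?thesis
      by (intro that[of j "\<lambda>i. if i \<le> j then even i else odd i"]) auto
  qed
  show ?thesis
  proof (rule that)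
    fix S assume "S \<in> F"
    with F free_pair show "(\<exists>i\<in>S. c i) \<and> (\<exists>i\<in>S. \<not> c i)"
      by (intro cyclic_interval_meets_both_colours[OF _ _ _ alternating wrap]) auto
  qed
qed

lemma linear_relation_trivial_if_one_negative:
  fixes V :: "'a::real_inner set" and d :: "'a \<Rightarrow> real"
  assumes "finite V" "a \<in> V"
    and relation: "\<And>w. (\<Sum>b\<in>V. d b * inner b w) = 0"
    and others_nonneg: "\<And>b. b \<in> V - {a} \<Longrightarrow> 0 \<le> d b"
    and positive: "\<And>b. b \<in> V \<Longrightarrow> inner b u > 0"
    and isolating: "inner a v \<le> 0" "\<And>b. b \<in> V - {a} \<Longrightarrow> inner b v > 0"
  shows "\<forall>b\<in>V. d b = 0"
proof -
  have terms_vanish: "d b * inner b w = 0"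
    if "\<And>b. b \<in> V \<Longrightarrow> 0 \<le> d b * inner b w" "b \<in> V" for w b
    using sum_nonneg_eq_0_iff[OF \<open>finite V\<close>, of "\<lambda>b. d b * inner b w"] relation that by blast
  have "0 \<le> d a"
  proof (rule ccontr)
    assume "\<not> 0 \<le> d a"
    then have "0 \<le> d b * inner b v" if "b \<in> V" for b
      using isolating(1) isolating(2)[of b] others_nonneg[of b] that
      by (cases "b = a") (simp_all add: mult_nonpos_nonpos)
    then have "d b = 0" if "b \<in> V - {a}" for b
      using terms_vanish[of v b] isolating(2)[OF that] that by simp
    then have "d a * inner a u = 0"
      using relation[of u] sum.remove[OF \<open>finite V\<close> \<open>a \<in> V\<close>, of "\<lambda>b. d b * inner b u"] by simp
    with \<open>\<not> 0 \<le> d a\<close> positive[OF \<open>a \<in> V\<close>] show False by simp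
  qed
  then have nonneg: "0 \<le> d b * inner b u" if "b \<in> V" for b
    using others_nonneg[of b] positive[OF that] that by (cases "b = a") simp_all
  show ?thesis
  proof
    fix b assume "b \<in> V"
    with terms_vanish[OF nonneg \<open>b \<in> V\<close>] positive[OF \<open>b \<in> V\<close>] show "d b = 0" by simp
  qed
qed

lemma all_but_one_nonnegE:
  fixes d :: "'a \<Rightarrow> real"
  assumes "finite V" "V \<noteq> {}" "card {b\<in>V. d b < 0} \<le> 1"
  obtains a where "a \<in> V" "\<And>b. b \<in> V - {a} \<Longrightarrow> 0 \<le> d b"
proof -
  obtain a where "a \<in> V" and negative: "{b\<in>V. d b < 0} \<subseteq> {a}"
  proof (cases "{b\<in>V. d b < 0} = {}")
    case True
    with \<open>V \<noteq> {}\<close> that show ?thesis by blast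
  next
    case False
    then obtain a where "a \<in> V" "d a < 0" by blast
    moreover have "{b\<in>V. d b < 0} \<subseteq> {a}"
      using assms(3) card_le_Suc0_iff_eq[of "{b\<in>V. d b < 0}"] \<open>finite V\<close> calculation by auto
    ultimately show ?thesis using that by blast
  qed
  moreover have "0 \<le> d b" if "b \<in> V - {a}" for b
  proof (rule ccontr)
    assume "\<not> 0 \<le> d b"
    with negative that show False by auto
  qed
  ultimately show ?thesis using that by blast
qed

lemma independent_if_isolating_halfspaces:
  fixes V :: "'a::real_inner set" and u :: 'a
  assumes "finite V" "card V \<le> 3"
    and positive: "\<And>a. a \<in> V \<Longrightarrow> inner a u > 0"
    and isolating: "\<And>a. a \<in> V \<Longrightarrow> \<exists>v. inner a v \<le> 0 \<and> (\<forall>b\<in>V - {a}. inner b v > 0)"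
  shows "independent V"
proof
  assume "dependent V"
  then obtain c where nontrivial: "\<exists>b\<in>V. c b \<noteq> 0" and "(\<Sum>b\<in>V. c b *\<^sub>R b) = 0"
    using real_vector.dependent_finite[OF \<open>finite V\<close>] by blast
  moreover have "(\<Sum>b\<in>V. c b * inner b w) = inner (\<Sum>b\<in>V. c b *\<^sub>R b) w" for w
    by (simp add: inner_sum_left)
  ultimately have relation: "(\<Sum>b\<in>V. c b * inner b w) = 0" for w
    by simp
  have "V \<noteq> {}" using nontrivial by blast
  have trivial: "\<forall>b\<in>V. d b = 0"
    if rel: "\<And>w. (\<Sum>b\<in>V. d b * inner b w) = 0" and few: "card {b\<in>V. d b < 0} \<le> 1" for d
  proof -
    obtain a where "a \<in> V" and others: "\<And>b. b \<in> V - {a} \<Longrightarrow> 0 \<le> d b"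
      using all_but_one_nonnegE[OF \<open>finite V\<close> \<open>V \<noteq> {}\<close> few] by blast
    obtain v where v: "inner a v \<le> 0" "\<And>b. b \<in> V - {a} \<Longrightarrow> inner b v > 0"
      using isolating[OF \<open>a \<in> V\<close>] by blast
    show ?thesis
      by (rule linear_relation_trivial_if_one_negative[OF \<open>finite V\<close> \<open>a \<in> V\<close> rel others positive v])
  qed
  have "card {b\<in>V. c b < 0} + card {b\<in>V. 0 < c b} \<le> card V"
    using \<open>finite V\<close> by (subst card_Un_disjoint[symmetric]) (auto intro: card_mono)
  with \<open>card V \<le> 3\<close> consider "card {b\<in>V. c b < 0} \<le> 1" | "card {b\<in>V. - c b < 0} \<le> 1"
    by fastforce
  then have "\<forall>b\<in>V. c b = 0"
  proof cases
    case 1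
    with trivial[OF relation] show ?thesis by simp
  next
    case 2
    have "(\<Sum>b\<in>V. - c b * inner b w) = 0" for w
      using relation[of w] by (simp add: sum_negf)
    from trivial[of "\<lambda>b. - c b", OF this 2] show ?thesis by simp
  qed
  with nontrivial show False by blast
qed

lemma no_three_isolating_halfplanes:
  fixes w :: "nat \<Rightarrow> real \<times> real"
  assumes "\<forall>j<3. \<exists>a. \<forall>k<4. inner a (w k) \<le> 0 \<longleftrightarrow> k = j"
  shows False
proof -
  obtain a where a: "\<forall>j<3. \<forall>k<4. inner (a j) (w k) \<le> 0 \<longleftrightarrow> k = j"
    using assms by metis
  have "inj_on a {..<3}"
  proof (rule inj_onI)
    fix j k assume "j \<in> {..<3}" "k \<in> {..<3}" "a j = a k"
    then show "j = k" using a[rule_format, of j j] a[rule_format, of k j] by simp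
  qed
  then have "card (a ` {..<3}) = 3" by (simp add: card_image)
  then have "dependent (a ` {..<3})" by (intro dependent_biggerset) auto
  moreover have "independent (a ` {..<3})"
  proof (rule independent_if_isolating_halfspaces[where u = "w 3"])
    show "finite (a ` {..<3})" "card (a ` {..<3}) \<le> 3" using \<open>card (a ` {..<3}) = 3\<close> by auto
  next
    fix b assume "b \<in> a ` {..<3}"
    then obtain j where "j < 3" "b = a j" by blast
    then show "inner b (w 3) > 0" using a[rule_format, of j 3] by simp
  next
    fix b assume "b \<in> a ` {..<3}"
    then obtain j where "j < 3" "b = a j" by blast
    show "\<exists>v. inner b v \<le> 0 \<and> (\<forall>b'\<in>a ` {..<3} - {b}. inner b' v > 0)"
    proof (intro exI[of _ "w j"] conjI ballI)
      show "inner b (w j) \<le> 0" using a \<open>j < 3\<close> \<open>b = a j\<close> by simp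
      fix b' assume "b' \<in> a ` {..<3} - {b}"
      then obtain k where "k < 3" "b' = a k" "k \<noteq> j" using \<open>b = a j\<close> by blast
      then show "inner b' (w j) > 0" using a[rule_format, of k j] \<open>j < 3\<close> by simp
    qed
  qed
  ultimately show False by blast
qed

lemma exists_pair_not_cut_off:
  fixes ws :: "(real \<times> real) list"
  assumes "7 \<le> length ws"
  shows "\<exists>j\<in>{0, 2, 4}. \<forall>a. halfplane_indices ws a \<noteq> {j, Suc j}"
proof (rule ccontr)
  assume no_free_pair: "\<not> ?thesis"
  have cut: "\<exists>a. halfplane_indices ws a = {2*j, Suc (2*j)}" if "j < 3" for j
  proof -
    have "2*j \<in> {0, 2, 4}" using that by simp presburger
    with no_free_pair show ?thesis by blast
  qed
  have "\<exists>a. \<forall>k<4. inner a (ws!(2*k)) \<le> 0 \<longleftrightarrow> k = j" if j: "j < 3" for j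
  proof -
    obtain a where a: "halfplane_indices ws a = {2*j, Suc (2*j)}"
      using cut[OF j] by blast
    have "inner a (ws!(2*k)) \<le> 0 \<longleftrightarrow> k = j" if "k < 4" for k
    proof -
      have "2*k < length ws" using that assms by simp
      then have "inner a (ws!(2*k)) \<le> 0 \<longleftrightarrow> 2*k \<in> {2*j, Suc (2*j)}"
        by (simp add: halfplane_indices_def flip: a)
      moreover have "2*k \<in> {2*j, Suc (2*j)} \<longleftrightarrow> k = j" by auto
      ultimately show ?thesis by simp
    qed
    then show ?thesis by blast
  qed
  then show False
    by (intro no_three_isolating_halfplanes[of "\<lambda>k. ws!(2*k)"]) blast
qed

lemma halfplane_indices_two_colouring:
  fixes ws :: "(real \<times> real) list"
  assumes "6 \<le> length ws" "sorted (map polar_angle ws)" "0 \<notin> set ws"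
    and depth: "\<And>a. a \<noteq> 0 \<Longrightarrow> 2 \<le> card (halfplane_indices ws a)"
  obtains c where "\<And>a. a \<noteq> 0 \<Longrightarrow>
    (\<exists>i\<in>halfplane_indices ws a. c i) \<and> (\<exists>i\<in>halfplane_indices ws a. \<not> c i)"
proof -
  let ?F = "halfplane_indices ws ` (-{0})"
  have arcs: "T \<subseteq> {..<length ws} \<and> 2 \<le> card T \<and> cyclic_interval (length ws) T" if "T \<in> ?F" for T
    using that depth halfplane_indices_cyclic_interval[OF assms(2,3)]
    by (auto simp: halfplane_indices_def)
  have free_pair: "\<exists>j\<in>{0, 2, 4}. {j, Suc j} \<notin> ?F" if "odd (length ws)"
  proof -
    have "7 \<le> length ws" using \<open>odd (length ws)\<close> \<open>6 \<le> length ws\<close> by presburger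
    then obtain j where "j \<in> {0, 2, 4}" and "\<forall>a. halfplane_indices ws a \<noteq> {j, Suc j}"
      using exists_pair_not_cut_off by blast
    then show ?thesis by (metis imageE)
  qed
  obtain c where "\<And>T. T \<in> ?F \<Longrightarrow> (\<exists>i\<in>T. c i) \<and> (\<exists>i\<in>T. \<not> c i)"
    using cyclic_intervals_two_colouring[OF \<open>6 \<le> length ws\<close> arcs free_pair] by blast
  then show ?thesis using that by blast
qed

lemma mem_convex_hull_if_halfspaces:
  fixes p :: "'a::euclidean_space" and T :: "'a set"
  assumes "finite T" and halfspaces: "\<And>a. a \<noteq> 0 \<Longrightarrow> \<exists>x\<in>T. inner a x \<le> inner a p"
  shows "p \<in> convex hull T"
proof (rule ccontr)
  assume "p \<notin> convex hull T"
  moreover have "closed (convex hull T)"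
    using \<open>finite T\<close> by (simp add: compact_imp_closed finite_imp_compact_convex_hull)
  ultimately obtain a b where ab: "inner a p < b" "\<And>x. x \<in> convex hull T \<Longrightarrow> b < inner a x"
    using separating_hyperplane_closed_point[OF convex_convex_hull] by blast
  obtain x0 where "x0 \<in> T"
    using halfspaces[of "SOME i. i \<in> Basis"] SOME_Basis nonzero_Basis by blast
  have "a \<noteq> 0"
  proof
    assume "a = 0"
    then show False using ab(1) ab(2)[OF hull_inc[OF \<open>x0 \<in> T\<close>]] by simp
  qed
  then obtain x where "x \<in> T" "inner a x \<le> inner a p" using halfspaces by blast
  then show False using ab(1) ab(2)[OF hull_inc[OF \<open>x \<in> T\<close>]] by simp
qed

lemma bipartition_if_colouring_meets_halfspaces:
  fixes xs :: "'a::euclidean_space list" and c :: "nat \<Rightarrow> bool"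
  assumes "\<And>a. a \<noteq> 0 \<Longrightarrow> (\<exists>i<length xs. c i \<and> inner a (xs!i) \<le> inner a p)
      \<and> (\<exists>i<length xs. \<not> c i \<and> inner a (xs!i) \<le> inner a p)"
  shows "\<exists>A1 A2. mset xs = A1 + A2 \<and> p \<in> convex hull set_mset A1 \<and> p \<in> convex hull set_mset A2"
proof -
  let ?part = "\<lambda>P. mset (map (nth xs) (filter P [0..<length xs]))"
  have hull: "p \<in> convex hull set_mset (?part P)"
    if P: "\<And>a. a \<noteq> 0 \<Longrightarrow> \<exists>i<length xs. P i \<and> inner a (xs!i) \<le> inner a p" for P
  proof (rule mem_convex_hull_if_halfspaces)
    fix a :: 'a assume "a \<noteq> 0"
    then obtain i where "i < length xs" "P i" "inner a (xs!i) \<le> inner a p" using P by blast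
    then show "\<exists>x\<in>set_mset (?part P). inner a x \<le> inner a p" by auto
  qed simp
  have "mset xs = image_mset (nth xs) (mset [0..<length xs])"
    by (metis map_nth mset_map)
  also have "\<dots> = ?part c + ?part (\<lambda>i. \<not> c i)"
    by (subst multiset_partition[of _ c]) simp
  finally have "mset xs = ?part c + ?part (\<lambda>i. \<not> c i)" .
  moreover have "p \<in> convex hull set_mset (?part c)" "p \<in> convex hull set_mset (?part (\<lambda>i. \<not> c i))"
    using assms by (intro hull; blast)+
  ultimately show ?thesis by blast
qed

lemma halfplane_indices_translate:
  "halfplane_indices (map (\<lambda>x. x - p) xs) a = {i. i < length xs \<and> inner a (xs!i) \<le> inner a p}"
  by (auto simp: halfplane_indices_def inner_diff_right)

lemma halfspace_depth_le_card_halfplane_indices: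
  assumes "has_halfspace_depth p t (mset xs)" and "a \<noteq> 0"
  shows "t \<le> card (halfplane_indices (map (\<lambda>x. x - p) xs) a)"
proof -
  have "p \<in> closed_halfplane a (inner a p)" by (simp add: closed_halfplane_def)
  with assms have "t \<le> size (filter_mset (\<lambda>x. x \<in> closed_halfplane a (inner a p)) (mset xs))"
    unfolding has_halfspace_depth_def by blast
  also have "\<dots> = length (filter (\<lambda>x. inner a x \<le> inner a p) xs)"
    by (simp add: closed_halfplane_def flip: mset_filter)
  also have "\<dots> = card (halfplane_indices (map (\<lambda>x. x - p) xs) a)"
    unfolding halfplane_indices_translate by (rule length_filter_conv_card)
  finally show ?thesis .
qed

theorem lemma3:
  fixes A :: "(real \<times> real) multiset" and p :: "real \<times> real"
  assumes "\<forall>x \<in># A. integral_point x"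
    and "size A \<ge> 6"
    and "p \<notin># A"
    and "has_halfspace_depth p 2 A"
  shows "\<exists>A1 A2. A = A1 + A2 \<and> p \<in> convex hull (set_mset A1) \<and> p \<in> convex hull (set_mset A2)"
proof -
  obtain xs0 where "mset xs0 = A" using ex_mset by blast
  define xs where "xs = sort_key (\<lambda>x. polar_angle (x - p)) xs0"
  define ws where "ws = map (\<lambda>x. x - p) xs"
  have A: "mset xs = A" using \<open>mset xs0 = A\<close> by (simp add: xs_def)
  have ws: "6 \<le> length ws" "sorted (map polar_angle ws)" "0 \<notin> set ws"
    using assms(2,3) A by (auto simp: ws_def xs_def o_def simp flip: size_mset)
  have depth: "2 \<le> card (halfplane_indices ws a)" if "a \<noteq> 0" for a
    using halfspace_depth_le_card_halfplane_indices[of p 2 xs a] assms(4) A that by (simp add: ws_def)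
  obtain c where colour: "\<And>a. a \<noteq> 0 \<Longrightarrow>
    (\<exists>i\<in>halfplane_indices ws a. c i) \<and> (\<exists>i\<in>halfplane_indices ws a. \<not> c i)"
    using halfplane_indices_two_colouring[OF ws depth] by blast
  have "(\<exists>i<length xs. c i \<and> inner a (xs!i) \<le> inner a p)
      \<and> (\<exists>i<length xs. \<not> c i \<and> inner a (xs!i) \<le> inner a p)" if "a \<noteq> 0" for a
    using colour[OF that] unfolding ws_def halfplane_indices_translate by auto
  from bipartition_if_colouring_meets_halfspaces[OF this] show ?thesis unfolding A .
qed

end
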